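(* Under the hypotheses and notation of the following setting: $T_t$ is the special flow over the dyadic odometer on $M=[0,1)^2$; $(p_n)$ are natural numbers with $p_{n+1}\ge p_n+2$; $d_n\in(0,1/2)$, $a_n>0$ with $\sum_{m>n}a_m=o(a_nd_n)$ and $2^{p_n-2}<d_m2^{p_m-1}$ for all $m>n$; $L_n=d_n2^{p_n-1}$; $f_n(u,v)=a_n$ for $0\le v<L_n$, $f_n(u,v)=-a_n$ for $2^{p_n-1}\le v<2^{p_n-1}+L_n$, $f_n=0$ otherwise, on $[0,2^{-p_n})\times[0,2^{p_n})$; $f=\sum_n f_n\circ\Phi_{p_n}^{-1}$; $t_n=2^{p_n-2}$. Then the bound $\mathcal{O}(a_nd_n)$ cannot be improved to $o(a_nd_n)$: there are sets $D_n\subset M$ with $m(D_n)=\frac12-d_n$ such that $\sup_{(x,y)\in D_n}\big|\,|A(f,t_n,(x,y))|-2a_nd_n\big|=o(a_nd_n)$ as $n\to\infty$.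
   Context: Dyadic odometer $S$ on $[0,1)$: on binary expansions $x=\sum x_i2^{-i}$ (not eventually all $1$), if $x_1=\dots=x_m=1$, $x_{m+1}=0$, then $S$ replaces these digits by $0,\dots,0,1$, others unchanged. Special flow: $T_t(x,y)=(S^{\lfloor y+t\rfloor}x,\ y+t-\lfloor y+t\rfloor)$ on $M=[0,1)^2$ with Lebesgue measure $m$. $\Phi_p(u,v)=T_v(u,0)$ for $(u,v)\in[0,2^{-p})\times[0,2^p)$ is a measure-preserving bijection onto $M$ (mod 0). $A(f,t,z)=\frac1t\int_0^tf(T_sz)\,ds$. *)

theory Defs
  imports "HOL-Analysis.Analysis" "HOL-Library.Landau_Symbols"
begin

text \<open>i-th binary digit (i \<ge> 1) of x in [0,1), the expansion not ending in all 1s.\<close>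
definition bdigit :: "nat \<Rightarrow> real \<Rightarrow> int" where
  "bdigit i x = \<lfloor>2 ^ i * x\<rfloor> mod 2"

text \<open>Dyadic odometer: if x_1 = ... = x_m = 1 and x_(m+1) = 0, these digits
  are replaced by 0,...,0,1.\<close>
definition odometer :: "real \<Rightarrow> real" where
  "odometer x = (let m = (LEAST m. bdigit (Suc m) x = 0)
                 in x - (\<Sum>i=1..m. (1/2) ^ i) + (1/2) ^ Suc m)"

text \<open>Special flow T_t(x,y) = (S^floor(y+t) x, frac(y+t)) (used for t \<ge> 0).\<close>
definition flow :: "real \<Rightarrow> real \<times> real \<Rightarrow> real \<times> real" where
  "flow t z = ((odometer ^^ nat \<lfloor>snd z + t\<rfloor>) (fst z), frac (snd z + t))"

definition M :: "(real \<times> real) set" where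
  "M = {0..<1} \<times> {0..<1}"

definition Phi :: "nat \<Rightarrow> real \<times> real \<Rightarrow> real \<times> real" where
  "Phi p w = flow (snd w) (fst w, 0)"

definition PhiDom :: "nat \<Rightarrow> (real \<times> real) set" where
  "PhiDom p = {0..<(1/2) ^ p} \<times> {0..<2 ^ p}"

definition Phi_inv :: "nat \<Rightarrow> real \<times> real \<Rightarrow> real \<times> real" where
  "Phi_inv p = inv_into (PhiDom p) (Phi p)"

definition avg :: "(real \<times> real \<Rightarrow> real) \<Rightarrow> real \<Rightarrow> real \<times> real \<Rightarrow> real" where
  "avg f t z = (1 / t) * (LINT s:{0..t}|lborel. f (flow s z))"

definition block :: "nat \<Rightarrow> real \<Rightarrow> real \<Rightarrow> real \<times> real \<Rightarrow> real" where
  "block p a d w =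
     (let u = fst w; v = snd w; L = d * 2 powr (real p - 1) in
      if w \<in> PhiDom p \<and> 0 \<le> v \<and> v < L then a
      else if w \<in> PhiDom p \<and> 2 powr (real p - 1) \<le> v \<and> v < 2 powr (real p - 1) + L then - a
      else 0)"

definition bigf :: "(nat \<Rightarrow> nat) \<Rightarrow> (nat \<Rightarrow> real) \<Rightarrow> (nat \<Rightarrow> real) \<Rightarrow> real \<times> real \<Rightarrow> real" where
  "bigf p a d z = (\<Sum>n. block (p n) (a n) (d n) (Phi_inv (p n) z))"

end

theory Submission
  imports Defs "HOL-Library.Real_Mod"
begin

text \<open>In the coordinates \<open>\<Phi>\<^sub>p\<close> the flow translates the height \<open>v\<close> modulo \<open>2^p\<close>, so along an
  orbit the block \<open>f\<^sub>m\<close> is a function of the height alone, antiperiodic with half-period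
  \<open>2^(p\<^sub>m - 1)\<close>. Over the time \<open>t\<^sub>n = 2^(p\<^sub>n - 2)\<close> the blocks \<open>m < n\<close> run through whole periods
  and integrate to zero, while the blocks \<open>m > n\<close> contribute at most \<open>t\<^sub>n \<Sum>\<^bsub>m>n\<^esub> a\<^sub>m\<close>.
  Let \<open>H = 2^(p\<^sub>n - 1)\<close> and \<open>L = d\<^sub>n H\<close>. An orbit starting at a height in
  \<open>[H/2 + L, H) \<union> [3H/2 + L, 2H)\<close> crosses exactly one whole pulse of \<open>f\<^sub>n\<close> before time
  \<open>t\<^sub>n = H/2\<close>, which contributes \<open>\<plusminus>a\<^sub>n L = \<plusminus>2 a\<^sub>n d\<^sub>n t\<^sub>n\<close>; these points form \<open>D\<^sub>n\<close>, of
  measure \<open>2 (H/2 - L) / 2H = 1/2 - d\<^sub>n\<close>.\<close>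

section \<open>The dyadic odometer\<close>

lemma bdigit_1: "0 \<le> x \<Longrightarrow> x < 1 \<Longrightarrow> bdigit 1 x = (if x < 1/2 then 0 else 1)"
  by (auto simp: bdigit_def floor_eq_iff)

lemma bdigit_Suc_double_minus_1: "bdigit (Suc i) (2 * x - 1) = bdigit (Suc (Suc i)) x"
proof -
  have "\<lfloor>2 ^ Suc i * (2 * x - 1)\<rfloor> = \<lfloor>2 ^ Suc (Suc i) * x\<rfloor> - 2 ^ Suc i"
    using floor_diff_of_int[of "2 ^ Suc (Suc i) * x" "2 ^ Suc i"] by (simp add: algebra_simps)
  then show ?thesis
    by (simp add: bdigit_def mod_diff_right_eq[symmetric])
qed

lemma bdigits_1_imp_ge:
  "0 \<le> x \<Longrightarrow> x < 1 \<Longrightarrow> (\<forall>j<i. bdigit (Suc j) x = 1) \<Longrightarrow> 1 - (1/2) ^ i \<le> x"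
proof (induction i arbitrary: x)
  case 0
  then show ?case by simp
next
  case (Suc i)
  then have "1/2 \<le> x"
    using bdigit_1[of x] by (force split: if_splits)
  moreover have "\<forall>j<i. bdigit (Suc j) (2 * x - 1) = 1"
    using Suc.prems(3) bdigit_Suc_double_minus_1 by auto
  ultimately have "1 - (1/2) ^ i \<le> 2 * x - 1"
    using Suc by auto
  then show ?case by simp
qed

lemma ex_bdigit_eq_0: "0 \<le> x \<Longrightarrow> x < 1 \<Longrightarrow> \<exists>m. bdigit (Suc m) x = 0"
proof (rule ccontr)
  assume x: "0 \<le> x" "x < 1" and "\<nexists>m. bdigit (Suc m) x = 0"
  then have "\<forall>j<i. bdigit (Suc j) x = 1" for i
    by (auto simp: bdigit_def)
  then have ge: "1 - (1/2) ^ i \<le> x" for i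
    using bdigits_1_imp_ge x by blast
  obtain i where "(1/2::real) ^ i < 1 - x"
    using real_arch_pow_inv[of "1 - x" "1/2"] x by auto
  with ge[of i] show False
    by linarith
qed

lemma Least_bdigit_eq_0_double_minus_1:
  assumes "1/2 \<le> x" "x < 1"
  shows "(LEAST m. bdigit (Suc m) x = 0) = Suc (LEAST m. bdigit (Suc m) (2 * x - 1) = 0)"
proof -
  obtain m where "bdigit (Suc m) x = 0"
    using ex_bdigit_eq_0 assms by fastforce
  moreover have "bdigit 1 x \<noteq> 0"
    using bdigit_1 assms by auto
  ultimately show ?thesis
    using Least_Suc[of "\<lambda>m. bdigit (Suc m) x = 0" m] by (simp add: bdigit_Suc_double_minus_1)
qed

lemma odometer_eq:
  assumes "0 \<le> x" "x < 1"
  shows "odometer x = (if x < 1/2 then x + 1/2 else odometer (2 * x - 1) / 2)"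
proof -
  have geometric: "(\<Sum>i=1..m. (1/2::real) ^ i) = 1 - (1/2) ^ m" for m
    by (induction m) (auto simp: sum.atLeast1_atMost_eq)
  have odometer_Least: "odometer y = y - 1 + (1/2) ^ m + (1/2) ^ Suc m"
    if "m = (LEAST m. bdigit (Suc m) y = 0)" for y m
    unfolding odometer_def Let_def geometric that[symmetric] by simp
  show ?thesis
  proof (cases "x < 1/2")
    case True
    then have "(LEAST m. bdigit (Suc m) x = 0) = 0"
      using bdigit_1 assms by (intro Least_eq_0) simp
    then show ?thesis
      using True odometer_Least by simp
  next
    case False
    define m where "m = (LEAST m. bdigit (Suc m) (2 * x - 1) = 0)"
    have "odometer x = x - 1 + (1/2) ^ Suc m + (1/2) ^ Suc (Suc m)"
      using odometer_Least Least_bdigit_eq_0_double_minus_1[of x] assms False m_def by simp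
    moreover have "odometer (2 * x - 1) = 2 * x - 2 + (1/2) ^ m + (1/2) ^ Suc m"
      using odometer_Least m_def by simp
    ultimately show ?thesis
      using False by simp
  qed
qed

lemma odometer_in_unit_interval: "x \<in> {0..<1} \<Longrightarrow> odometer x \<in> {0..<1}"
proof (induction "LEAST m. bdigit (Suc m) x = 0" arbitrary: x)
  case 0
  then have "x < 1/2"
    using Least_bdigit_eq_0_double_minus_1[of x] by fastforce
  then show ?case
    using "0.prems" odometer_eq[of x] by auto
next
  case (Suc k)
  have "\<not> x < 1/2"
  proof
    assume "x < 1/2"
    then have "(LEAST m. bdigit (Suc m) x = 0) = 0"
      using bdigit_1 Suc.prems by (intro Least_eq_0) simp
    with Suc.hyps(2) show False by simp
  qed
  then have "2 * x - 1 \<in> {0..<1}" and "k = (LEAST m. bdigit (Suc m) (2 * x - 1) = 0)"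
    using Suc Least_bdigit_eq_0_double_minus_1[of x] by auto
  then have "odometer (2 * x - 1) \<in> {0..<1}"
    using Suc.hyps(1) by blast
  then show ?case
    using \<open>\<not> x < 1/2\<close> Suc.prems odometer_eq[of x] by auto
qed

lemma odometer_funpow_in_unit_interval: "x \<in> {0..<1} \<Longrightarrow> (odometer ^^ k) x \<in> {0..<1}"
  by (induction k) (simp_all del: atLeastLessThan_iff add: odometer_in_unit_interval)

fun bitrev :: "nat \<Rightarrow> nat \<Rightarrow> nat" where
  "bitrev 0 k = 0"
| "bitrev (Suc p) k = bitrev p (k div 2) + (k mod 2) * 2 ^ p"

lemma bitrev_less: "bitrev p k < 2 ^ p"
proof (induction p arbitrary: k)
  case 0
  then show ?case by simp
next
  case (Suc p)
  have "bitrev p (k div 2) + (k mod 2) * 2 ^ p < 2 ^ p + 1 * 2 ^ p"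
    using Suc.IH[of "k div 2"] by (intro add_less_le_mono mult_le_mono1) auto
  then show ?case by simp
qed

lemma inj_on_bitrev: "inj_on (bitrev p) {..<2 ^ p}"
proof (induction p)
  case 0
  then show ?case by (simp add: inj_on_def)
next
  case (Suc p)
  show ?case
  proof (rule inj_onI)
    fix k l
    assume k: "k \<in> {..<2 ^ Suc p}" and l: "l \<in> {..<2 ^ Suc p}"
      and eq: "bitrev (Suc p) k = bitrev (Suc p) l"
    have "k mod 2 = l mod 2"
      using eq bitrev_less[of p "k div 2"] bitrev_less[of p "l div 2"]
      by (auto simp: mod2_eq_if split: if_splits)
    moreover have "k div 2 = l div 2"
      using eq calculation k l Suc.IH by (auto dest: inj_onD)
    ultimately show "k = l"
      by (metis div_mult_mod_eq)
  qed
qed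

lemma bitrev_image: "bitrev p ` {..<2 ^ p} = {..<2 ^ p}"
  using endo_inj_surj[of "{..<2 ^ p}" "bitrev p"] inj_on_bitrev bitrev_less by auto

lemma odometer_funpow_double:
  assumes "0 \<le> u" "u < 1/2"
  shows "(odometer ^^ (2 * j)) u = (odometer ^^ j) (2 * u) / 2"
proof (induction j)
  case 0
  then show ?case by simp
next
  case (Suc j)
  define w where "w = (odometer ^^ j) (2 * u) / 2"
  have w: "0 \<le> w" "w < 1/2"
    using odometer_funpow_in_unit_interval[of "2 * u" j] assms unfolding w_def by auto
  have "(odometer ^^ (2 * Suc j)) u = odometer (odometer ((odometer ^^ (2 * j)) u))"
    by (simp only: mult_Suc_right add_2_eq_Suc funpow.simps o_apply)
  also have "\<dots> = odometer (odometer w)"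
    by (simp only: Suc.IH w_def)
  also have "\<dots> = odometer (2 * w) / 2"
    using w odometer_eq[of w] odometer_eq[of "w + 1/2"] by (simp add: algebra_simps)
  also have "\<dots> = (odometer ^^ Suc j) (2 * u) / 2"
    unfolding w_def by simp
  finally show ?case .
qed

text \<open>On \<open>[0, 2^-p)\<close> the first \<open>p\<close> digits vanish, and the odometer counts in them with the first
  digit as the least significant one, so \<open>k\<close> steps shift by \<open>bitrev p k / 2^p\<close>.\<close>
lemma odometer_funpow_dyadic:
  assumes "u \<in> {0..<(1/2) ^ p}" "k < 2 ^ p"
  shows "(odometer ^^ k) u = u + bitrev p k / 2 ^ p"
  using assms
proof (induction p arbitrary: u k)
  case 0
  then show ?case by simp
next
  case (Suc p)
  define j where "j = k div 2"
  have "(1/2::real) ^ Suc p \<le> 1/2"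
    by (simp add: power_le_one)
  then have u: "0 \<le> u" "u < 1/2" "2 * u \<in> {0..<(1/2) ^ p}"
    using Suc.prems(1) by auto
  have "j < 2 ^ p"
    using Suc.prems(2) unfolding j_def by auto
  then have "(odometer ^^ (2 * j)) u = (2 * u + bitrev p j / 2 ^ p) / 2"
    by (simp only: odometer_funpow_double[OF u(1,2)] Suc.IH[OF u(3)])
  then have even: "(odometer ^^ (2 * j)) u = u + bitrev p j / 2 ^ Suc p"
    by (simp add: field_simps)
  have "bitrev p j + 1 \<le> 2 ^ p"
    using bitrev_less[of p j] by simp
  then have "real (bitrev p j + 1) \<le> real (2 ^ p)"
    by (simp only: of_nat_le_iff)
  then have "u + bitrev p j / 2 ^ Suc p < 1/2"
    using Suc.prems(1) by (simp add: field_simps)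
  then have odd: "odometer ((odometer ^^ (2 * j)) u) = u + bitrev p j / 2 ^ Suc p + 1/2"
    using even odometer_eq[of "u + bitrev p j / 2 ^ Suc p"] u by simp
  have bitrev_Suc: "bitrev (Suc p) k = bitrev p j + (k mod 2) * 2 ^ p"
    by (simp add: j_def)
  show ?case
  proof (cases "even k")
    case True
    then have "k = 2 * j"
      by (simp add: j_def)
    then show ?thesis
      using even bitrev_Suc True by simp
  next
    case False
    then have "k mod 2 = 1" and "k = Suc (2 * j)"
      by (simp_all add: j_def odd_iff_mod_2_eq_one)
    then have "(odometer ^^ k) u = u + bitrev p j / 2 ^ Suc p + 1/2"
      using odd by simp
    then show ?thesis
      using bitrev_Suc \<open>k mod 2 = 1\<close> by (simp add: field_simps)
  qed
qed

lemma odometer_funpow_2_power: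
  "u \<in> {0..<(1/2) ^ p} \<Longrightarrow> (odometer ^^ 2 ^ p) u = odometer (2 ^ p * u) / 2 ^ p"
proof (induction p arbitrary: u)
  case 0
  then show ?case by simp
next
  case (Suc p)
  have "(1/2::real) ^ Suc p \<le> 1/2"
    by (simp add: power_le_one)
  then have "(odometer ^^ 2 ^ Suc p) u = (odometer ^^ 2 ^ p) (2 * u) / 2"
    using odometer_funpow_double[of u "2 ^ p"] Suc.prems by (simp add: mult.commute)
  also have "\<dots> = odometer (2 ^ Suc p * u) / 2 ^ Suc p"
    using Suc.IH[of "2 * u"] Suc.prems by (simp add: field_simps)
  finally show ?case .
qed

lemma odometer_funpow_2_power_in:
  assumes "u \<in> {0..<(1/2) ^ p}"
  shows "((odometer ^^ 2 ^ p) ^^ q) u \<in> {0..<(1/2) ^ p}"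
proof (induction q)
  case 0
  then show ?case using assms by simp
next
  case (Suc q)
  define w where "w = ((odometer ^^ 2 ^ p) ^^ q) u"
  have "2 ^ p * w \<in> {0..<1}"
    using Suc.IH unfolding w_def by (simp add: field_simps)
  then have "odometer (2 ^ p * w) / 2 ^ p \<in> {0..<(1/2) ^ p}"
    using odometer_in_unit_interval by (simp add: field_simps)
  then show ?case
    using odometer_funpow_2_power[of w p] Suc.IH unfolding w_def by simp
qed

section \<open>The tower coordinates \<open>\<Phi>\<^sub>p\<close>\<close>

lemma Phi_eq:
  assumes "(u, v) \<in> PhiDom p"
  shows "Phi p (u, v) = (u + bitrev p (nat \<lfloor>v\<rfloor>) / 2 ^ p, frac v)"
proof -
  have "nat \<lfloor>v\<rfloor> < 2 ^ p"
    using assms by (simp add: PhiDom_def nat_less_iff floor_less_iff)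
  then show ?thesis
    using odometer_funpow_dyadic[of u p "nat \<lfloor>v\<rfloor>"] assms
    by (simp add: Phi_def flow_def PhiDom_def)
qed

lemma inj_on_Phi: "inj_on (Phi p) (PhiDom p)"
proof (rule inj_onI)
  fix w w'
  assume w: "w \<in> PhiDom p" and w': "w' \<in> PhiDom p" and eq: "Phi p w = Phi p w'"
  obtain u v u' v' where uv: "w = (u, v)" "w' = (u', v')"
    by fastforce
  have dom: "u \<in> {0..<(1/2) ^ p}" "u' \<in> {0..<(1/2) ^ p}" "0 \<le> v" "0 \<le> v'"
    "nat \<lfloor>v\<rfloor> < 2 ^ p" "nat \<lfloor>v'\<rfloor> < 2 ^ p"
    using w w' uv by (auto simp: PhiDom_def nat_less_iff floor_less_iff)
  have frac_eq: "frac v = frac v'"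
    and fst_eq: "u + bitrev p (nat \<lfloor>v\<rfloor>) / 2 ^ p = u' + bitrev p (nat \<lfloor>v'\<rfloor>) / 2 ^ p"
    using eq Phi_eq w w' uv by auto
  have "\<lfloor>2 ^ p * (u + bitrev p k / 2 ^ p)\<rfloor> = bitrev p k" if "u \<in> {0..<(1/2) ^ p}" for u k
    using that by (simp add: floor_eq_iff field_simps)
  then have "bitrev p (nat \<lfloor>v\<rfloor>) = bitrev p (nat \<lfloor>v'\<rfloor>)"
    using fst_eq dom by (metis of_nat_eq_iff)
  then have "nat \<lfloor>v\<rfloor> = nat \<lfloor>v'\<rfloor>" and "u = u'"
    using inj_on_bitrev[of p] dom fst_eq by (auto dest: inj_onD)
  moreover have "\<lfloor>v\<rfloor> = \<lfloor>v'\<rfloor>"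
    using calculation(1) dom by (subst (asm) eq_nat_nat_iff) simp_all
  ultimately show "w = w'"
    using frac_eq uv by (metis frac_def diff_add_cancel)
qed

lemma Phi_inv_eqI: "w \<in> PhiDom p \<Longrightarrow> Phi p w = z \<Longrightarrow> Phi_inv p z = w"
  unfolding Phi_inv_def using inv_into_f_eq[OF inj_on_Phi] by blast

lemma M_subset_Phi_image: "M \<subseteq> Phi p ` PhiDom p"
proof
  fix z
  assume "z \<in> M"
  then obtain x y where z: "z = (x, y)" "x \<in> {0..<1}" "y \<in> {0..<1}"
    by (auto simp: M_def)
  define j where "j = nat \<lfloor>2 ^ p * x\<rfloor>"
  have j: "j < 2 ^ p" "real j \<le> 2 ^ p * x" "2 ^ p * x < real j + 1"
    using z by (auto simp: j_def nat_less_iff floor_less_iff)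
  obtain k where k: "k < 2 ^ p" "bitrev p k = j"
    using bitrev_image[of p] j by (metis imageE lessThan_iff)
  define u where "u = x - real j / 2 ^ p"
  have "k + 1 \<le> 2 ^ p"
    using k by simp
  then have "real (k + 1) \<le> real (2 ^ p)"
    by (simp only: of_nat_le_iff)
  then have "real k + y < 2 ^ p"
    using z by simp
  moreover have "0 \<le> u * 2 ^ p" "u * 2 ^ p < 1"
    using j by (simp_all add: u_def algebra_simps)
  ultimately have w: "(u, real k + y) \<in> PhiDom p"
    using z by (auto simp: PhiDom_def power_one_over field_simps zero_le_mult_iff)
  have "\<lfloor>real k + y\<rfloor> = int k" and "frac (real k + y) = y"
    using z by (auto simp: floor_eq_iff frac_def)
  then have "Phi p (u, real k + y) = z"
    using Phi_eq[OF w] k z by (simp add: u_def)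
  with w show "z \<in> Phi p ` PhiDom p"
    by blast
qed

lemma flow_flow:
  assumes "0 \<le> s" "0 \<le> y + t"
  shows "flow s (flow t (x, y)) = flow (t + s) (x, y)"
proof -
  have shifted: "frac (y + t) + s = y + (t + s) - of_int \<lfloor>y + t\<rfloor>"
    by (simp add: frac_def)
  have "\<lfloor>frac (y + t) + s\<rfloor> = \<lfloor>y + (t + s)\<rfloor> - \<lfloor>y + t\<rfloor>"
    unfolding shifted by (rule floor_diff_of_int)
  moreover have "0 \<le> \<lfloor>frac (y + t) + s\<rfloor>" "0 \<le> \<lfloor>y + t\<rfloor>"
    using assms by simp_all
  ultimately have "nat \<lfloor>y + (t + s)\<rfloor> = nat \<lfloor>frac (y + t) + s\<rfloor> + nat \<lfloor>y + t\<rfloor>"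
    by (simp add: nat_add_distrib[symmetric])
  moreover have "frac (frac (y + t) + s) = frac (y + (t + s))"
    unfolding shifted by (simp add: frac_def)
  ultimately show ?thesis
    by (simp add: flow_def funpow_add add.assoc)
qed

lemma flow_add_period:
  assumes "0 \<le> r"
  shows "flow (r + 2 ^ p * real q) (u, 0) = flow r (((odometer ^^ 2 ^ p) ^^ q) u, 0)"
proof -
  have period: "2 ^ p * real q = of_int (int (2 ^ p * q))"
    by simp
  have "\<lfloor>r + 2 ^ p * real q\<rfloor> = \<lfloor>r\<rfloor> + int (2 ^ p * q)"
    unfolding period by (rule floor_add_int[symmetric])
  then have "nat \<lfloor>r + 2 ^ p * real q\<rfloor> = nat \<lfloor>r\<rfloor> + 2 ^ p * q"
    using assms by (simp add: nat_add_distrib nat_mult_distrib nat_power_eq)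
  moreover have "frac (r + 2 ^ p * real q) = frac r"
    unfolding period by (rule frac_add_of_int_right)
  ultimately show ?thesis
    by (simp add: flow_def funpow_add funpow_mult)
qed

lemma flow_Phi:
  assumes "(u, v) \<in> PhiDom p" "0 \<le> s"
  obtains u' where "(u', (v + s) rmod 2 ^ p) \<in> PhiDom p"
    and "flow s (Phi p (u, v)) = Phi p (u', (v + s) rmod 2 ^ p)"
proof -
  define r where "r = (v + s) rmod 2 ^ p"
  define q where "q = nat \<lfloor>(v + s) / 2 ^ p\<rfloor>"
  define u' where "u' = ((odometer ^^ 2 ^ p) ^^ q) u"
  have r: "0 \<le> r" "r < 2 ^ p"
    by (simp_all add: r_def rmod_nonneg rmod_less)
  have "v + s = r + 2 ^ p * real q"
    using assms by (simp add: r_def q_def rmod_def PhiDom_def)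
  then have "flow s (Phi p (u, v)) = Phi p (u', r)"
    using flow_flow[of s 0 v u] flow_add_period[OF r(1)] assms
    by (simp add: Phi_def PhiDom_def u'_def)
  moreover have "(u', r) \<in> PhiDom p"
    using odometer_funpow_2_power_in[of u p q] assms r by (simp add: PhiDom_def u'_def)
  ultimately show ?thesis
    using that r_def by blast
qed

lemma Phi_inv_flow:
  assumes "z \<in> M" "0 \<le> s"
  shows "Phi_inv p (flow s z) \<in> PhiDom p
    \<and> snd (Phi_inv p (flow s z)) = (snd (Phi_inv p z) + s) rmod 2 ^ p"
proof -
  obtain u v where uv: "(u, v) \<in> PhiDom p" "Phi p (u, v) = z"
    using M_subset_Phi_image[of p] assms(1) by fastforce
  then obtain u' where "(u', (v + s) rmod 2 ^ p) \<in> PhiDom p"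
    and "flow s z = Phi p (u', (v + s) rmod 2 ^ p)"
    using flow_Phi[OF uv(1) assms(2)] uv(2) by blast
  then show ?thesis
    using Phi_inv_eqI uv by simp
qed

lemma set_integrable_bounded_measurable:
  fixes h :: "real \<Rightarrow> real"
  assumes "h \<in> borel_measurable borel" "\<And>s. \<bar>h s\<bar> \<le> B"
  shows "set_integrable lborel {x..y} h"
proof (rule set_integrable_bound[where f = "\<lambda>_. B"])
  show "set_integrable lborel {x..y} (\<lambda>_. B)"
    by (rule borel_integrable_atLeastAtMost') simp
  show "set_borel_measurable lborel {x..y} h"
    using assms(1) unfolding set_borel_measurable_def by measurable
  show "AE s in lborel. s \<in> {x..y} \<longrightarrow> norm (h s) \<le> norm B"
    using assms(2) by (auto intro: order_trans[OF _ abs_ge_self])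
qed

lemma
  fixes h :: "real \<Rightarrow> real"
  assumes "h \<in> borel_measurable borel" "\<And>s. \<bar>h s\<bar> \<le> B"
  shows integrable_on_bounded_measurable: "h integrable_on {x..y}"
    and set_integral_bounded_measurable_eq_integral: "(LINT s:{x..y}|lborel. h s) = integral {x..y} h"
  using set_borel_integral_eq_integral[OF set_integrable_bounded_measurable[OF assms]] by auto

lemma integral_antiperiodic_eq_0:
  fixes h :: "real \<Rightarrow> real"
  assumes "h \<in> borel_measurable borel" "\<And>s. \<bar>h s\<bar> \<le> B" "\<And>s. h (s + H) = - h s" "0 \<le> H"
  shows "integral {0..2 * H * real N} h = 0"
proof (induction N)
  case 0
  then show ?case by simp
next
  case (Suc N)
  define c where "c = 2 * H * real N"
  have c: "0 \<le> c"
    using assms(4) by (simp add: c_def)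
  have integrable: "h integrable_on {x..y}" for x y
    using integrable_on_bounded_measurable[OF assms(1,2)] .
  have "integral {0..c + 2 * H} h = integral {0..c} h + integral {c..c + 2 * H} h"
    using Henstock_Kurzweil_Integration.integral_combine[of 0 c "c + 2 * H" h] c assms(4) integrable by simp
  also have "integral {c..c + 2 * H} h = integral {c..c + H} h + integral {c + H..c + H + H} h"
    using Henstock_Kurzweil_Integration.integral_combine[of c "c + H" "c + 2 * H" h] assms(4) integrable
    by (simp add: algebra_simps)
  also have "integral {c + H..c + H + H} h = integral {c..c + H} (h \<circ> (+) H)"
    using integral_shift_Icc_real[of c "c + H" h H] by (simp add: algebra_simps)
  also have "h \<circ> (+) H = (\<lambda>s. - h s)"
    using assms(3) by (auto simp: add.commute)
  finally show ?case
    using Suc.IH by (simp add: c_def algebra_simps)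
qed

lemma abs_suminf_le:
  fixes f :: "nat \<Rightarrow> real"
  assumes "\<And>m. \<bar>f m\<bar> \<le> b m" "summable b"
  shows "\<bar>\<Sum>m. f m\<bar> \<le> (\<Sum>m. b m)"
proof -
  have "summable (\<lambda>m. \<bar>f m\<bar>)"
    by (rule summable_comparison_test[OF _ assms(2)]) (use assms(1) in auto)
  then have "\<bar>\<Sum>m. f m\<bar> \<le> (\<Sum>m. \<bar>f m\<bar>)"
    using summable_norm[of f] by simp
  also have "\<dots> \<le> (\<Sum>m. b m)"
    using assms \<open>summable (\<lambda>m. \<bar>f m\<bar>)\<close> by (intro suminf_le) auto
  finally show ?thesis .
qed

lemma integral_suminf_tail_bound:
  fixes h :: "nat \<Rightarrow> real \<Rightarrow> real"
  assumes meas: "\<And>m. h m \<in> borel_measurable borel" and bound: "\<And>m s. \<bar>h m s\<bar> \<le> b m"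
    and "summable b" "0 \<le> T"
  shows "\<bar>integral {0..T} (\<lambda>s. \<Sum>m. h m s) - (\<Sum>m<n. integral {0..T} (h m))\<bar>
    \<le> T * (\<Sum>m. b (m + n))"
proof -
  define R where "R s = (\<Sum>m. h (m + n) s)" for s
  have tail_summable: "summable (\<lambda>m. b (m + n))"
    using \<open>summable b\<close> by (rule summable_ignore_initial_segment)
  have abs_summable: "summable (\<lambda>m. \<bar>h m s\<bar>)" for s
    by (rule summable_comparison_test[OF _ \<open>summable b\<close>]) (use bound in auto)
  have split: "(\<Sum>m. h m s) = (\<Sum>m<n. h m s) + R s" for s
    using suminf_split_initial_segment[OF summable_rabs_cancel[OF abs_summable], of s n]
    unfolding R_def by simp
  have R_bound: "\<bar>R s\<bar> \<le> (\<Sum>m. b (m + n))" for s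
    unfolding R_def using bound tail_summable by (rule abs_suminf_le)
  have R_meas: "R \<in> borel_measurable borel"
    unfolding R_def[abs_def] using meas by measurable
  have integrable: "h m integrable_on {0..T}" "R integrable_on {0..T}" for m
    using integrable_on_bounded_measurable meas bound R_meas R_bound by blast+
  have "integral {0..T} (\<lambda>s. \<Sum>m. h m s) = (\<Sum>m<n. integral {0..T} (h m)) + integral {0..T} R"
    unfolding split using integrable by (simp add: integral_add integral_sum integrable_sum)
  moreover have "\<bar>integral {0..T} R\<bar> \<le> (\<Sum>m. b (m + n)) * T"
    using has_integral_bound[of "\<Sum>m. b (m + n)" R "integral {0..T} R" 0 T] integrable(2) R_bound
      order_trans[OF abs_ge_zero R_bound] \<open>0 \<le> T\<close> by (simp add: integrable_integral)
  ultimately show ?thesis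
    by (simp add: mult.commute)
qed

section \<open>The building blocks along the flow\<close>

text \<open>The height profile of \<open>f\<^sub>n\<close> in the coordinates \<open>\<Phi>\<^sub>p\<close>: \<open>H = 2^(p-1)\<close> is half the height of
  the tower and \<open>L = d H\<close> the width of the two pulses.\<close>
definition block_profile :: "real \<Rightarrow> real \<Rightarrow> real \<Rightarrow> real \<Rightarrow> real" where
  "block_profile H L a v = (if 0 \<le> v \<and> v < L then a else if H \<le> v \<and> v < H + L then - a else 0)"

lemma block_eq_block_profile:
  "w \<in> PhiDom p \<Longrightarrow> block p a d w = block_profile (2 ^ p / 2) (d * (2 ^ p / 2)) a (snd w)"
  by (simp add: block_def block_profile_def Let_def powr_diff powr_realpow)

lemma abs_block_profile_le: "\<bar>block_profile H L a v\<bar> \<le> \<bar>a\<bar>"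
  by (simp add: block_profile_def)

lemma block_profile_rmod_measurable [measurable]:
  "(\<lambda>s. block_profile H L a ((V + s) rmod c)) \<in> borel_measurable borel"
  unfolding block_profile_def rmod_def by measurable

lemma block_profile_rmod_antiperiodic:
  assumes "0 < H" "L \<le> H"
  shows "block_profile H L a ((w + H) rmod (2 * H)) = - block_profile H L a (w rmod (2 * H))"
proof -
  define r where "r = w rmod (2 * H)"
  have r: "0 \<le> r" "r < 2 * H"
    using assms by (simp_all add: r_def rmod_nonneg rmod_less)
  have "(w + H) rmod (2 * H) = (r + H) rmod (2 * H)"
    using rmod_add[of w "2 * H" H] assms by (simp add: r_def)
  also have "\<dots> = (if r < H then r + H else r - H)"
    using r by (auto intro: rmod_unique[where n = 1])
  finally show ?thesis
    using r assms by (simp add: r_def[symmetric] block_profile_def)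
qed

lemma integral_block_profile_periods:
  assumes "0 < H" "L \<le> H"
  shows "integral {0..2 * H * real N} (\<lambda>s. block_profile H L a ((V + s) rmod (2 * H))) = 0"
  using abs_block_profile_le block_profile_rmod_antiperiodic[OF assms, of a "V + _"] assms(1)
  by (intro integral_antiperiodic_eq_0[where B = "\<bar>a\<bar>"]) (auto simp: add.assoc)

lemma set_integral_indicator_Ico:
  assumes "0 \<le> e" "0 \<le> L" "e + L \<le> T"
  shows "(LINT s:{0..T}|lborel. c * indicator {e..<e + L} s) = (c * L :: real)"
proof -
  have "(LINT s:{0..T}|lborel. c * indicator {e..<e + L} s) = (\<integral>s. c * indicator {e..<e + L} s \<partial>lborel)"
    unfolding set_lebesgue_integral_def
    by (rule Bochner_Integration.integral_cong) (use assms in \<open>auto simp: indicator_def\<close>)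
  then show ?thesis
    using assms by simp
qed

lemma integral_block_profile_quarter:
  assumes "0 < L" "H / 2 + L \<le> V" "V < H"
  shows "integral {0..H / 2} (\<lambda>s. block_profile H L a ((V + s) rmod (2 * H))) = - a * L"
proof -
  have "block_profile H L a ((V + s) rmod (2 * H)) = - a * indicator {H - V..<H - V + L} s"
    if "s \<in> {0..H / 2}" for s
    using that assms by (auto simp: block_profile_def indicator_def)
  then have "(LINT s:{0..H / 2}|lborel. block_profile H L a ((V + s) rmod (2 * H)))
      = (LINT s:{0..H / 2}|lborel. - a * indicator {H - V..<H - V + L} s)"
    by (intro set_lebesgue_integral_cong) auto
  also have "\<dots> = - a * L"
    by (rule set_integral_indicator_Ico) (use assms in auto)
  finally show ?thesis
    using set_integral_bounded_measurable_eq_integral[OF block_profile_rmod_measurable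
        abs_block_profile_le]
    by simp
qed

lemma abs_integral_block_profile_quarter:
  assumes "0 < L" "0 \<le> a"
    and "H / 2 + L \<le> V \<and> V < H \<or> 3 * H / 2 + L \<le> V \<and> V < 2 * H"
  shows "\<bar>integral {0..H / 2} (\<lambda>s. block_profile H L a ((V + s) rmod (2 * H)))\<bar> = a * L"
  using assms(3)
proof
  assume "3 * H / 2 + L \<le> V \<and> V < 2 * H"
  then have "block_profile H L a ((V + s) rmod (2 * H))
      = - block_profile H L a ((V - H + s) rmod (2 * H))" for s
    using block_profile_rmod_antiperiodic[of H L a "V - H + s"] assms(1)
    by (simp add: algebra_simps)
  then show ?thesis
    using integral_block_profile_quarter[of L H "V - H" a] assms \<open>3 * H / 2 + L \<le> V \<and> V < 2 * H\<close>
    by simp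
qed (use integral_block_profile_quarter assms in simp)

section \<open>The sets \<open>D\<^sub>n\<close>\<close>

text \<open>Level \<open>k\<close> of the tower \<open>\<Phi>\<^sub>p\<close> lies above the dyadic interval with index \<open>bitrev p k\<close>;
  \<open>phase_band p \<alpha> \<beta>\<close> is the image of \<open>[0, 2^-p) \<times> [\<alpha>, \<beta>)\<close>.\<close>
definition level_box :: "nat \<Rightarrow> real \<Rightarrow> real \<Rightarrow> nat \<Rightarrow> (real \<times> real) set" where
  "level_box p \<alpha> \<beta> k = {bitrev p k / 2 ^ p..<bitrev p k / 2 ^ p + (1/2) ^ p}
     \<times> {max 0 (\<alpha> - real k)..<min 1 (\<beta> - real k)}"

definition phase_band :: "nat \<Rightarrow> real \<Rightarrow> real \<Rightarrow> (real \<times> real) set" where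
  "phase_band p \<alpha> \<beta> = (\<Union>k<2 ^ p. level_box p \<alpha> \<beta> k)"

lemma level_box_Phi_inv:
  assumes "k < 2 ^ p" "z \<in> level_box p \<alpha> \<beta> k"
  shows "z \<in> M" "snd (Phi_inv p z) = real k + snd z" "snd (Phi_inv p z) \<in> {\<alpha>..<\<beta>}"
proof -
  obtain x y where z: "z = (x, y)"
    by fastforce
  define c where "c = bitrev p k / 2 ^ p"
  have x: "c \<le> x" "x < c + (1/2) ^ p" and y: "0 \<le> y" "y < 1" "real k + y \<in> {\<alpha>..<\<beta>}"
    using assms z by (auto simp: level_box_def c_def)
  have "bitrev p k + 1 \<le> 2 ^ p" "k + 1 \<le> 2 ^ p"
    using bitrev_less[of p k] assms(1) by simp_all
  then have "real (bitrev p k + 1) \<le> real (2 ^ p)" "real (k + 1) \<le> real (2 ^ p)"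
    by (simp_all only: of_nat_le_iff)
  then have c: "0 \<le> c" "c + (1/2) ^ p \<le> 1" and "real k + y < 2 ^ p"
    using y by (auto simp: c_def field_simps)
  then have w: "(x - c, real k + y) \<in> PhiDom p"
    using x y by (auto simp: PhiDom_def)
  have "\<lfloor>real k + y\<rfloor> = int k" and "frac (real k + y) = y"
    using y by (auto simp: floor_eq_iff frac_def)
  then have "Phi p (x - c, real k + y) = z"
    using Phi_eq[OF w] z by (simp add: c_def)
  then have "Phi_inv p z = (x - c, real k + y)"
    using Phi_inv_eqI[OF w] by simp
  then show "snd (Phi_inv p z) = real k + snd z" "snd (Phi_inv p z) \<in> {\<alpha>..<\<beta>}"
    using y z by simp_all
  show "z \<in> M"
    using x y c z by (auto simp: M_def)
qed

lemma phase_band_Phi_inv: "z \<in> phase_band p \<alpha> \<beta> \<Longrightarrow> z \<in> M \<and> snd (Phi_inv p z) \<in> {\<alpha>..<\<beta>}"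
  unfolding phase_band_def using level_box_Phi_inv by blast

lemma level_box_sets: "level_box p \<alpha> \<beta> k \<in> sets lborel"
  unfolding level_box_def lborel_prod[symmetric] by (intro pair_measureI) auto

lemma emeasure_level_box:
  "emeasure lborel (level_box p \<alpha> \<beta> k)
    = ennreal ((1/2) ^ p * max 0 (min 1 (\<beta> - real k) - max 0 (\<alpha> - real k)))"
proof -
  have Ico: "emeasure lborel {l..<u} = ennreal (max 0 (u - l))" for l u :: real
    by (cases "l \<le> u") auto
  have "emeasure lborel (level_box p \<alpha> \<beta> k)
      = emeasure (lborel \<Otimes>\<^sub>M lborel) (level_box p \<alpha> \<beta> k)"
    by (simp add: lborel_prod)
  also have "\<dots> = emeasure lborel {bitrev p k / 2 ^ p..<bitrev p k / 2 ^ p + (1/2) ^ p}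
      * emeasure lborel {max 0 (\<alpha> - real k)..<min 1 (\<beta> - real k)}"
    unfolding level_box_def by (rule lborel.emeasure_pair_measure_Times) auto
  finally show ?thesis
    unfolding Ico by (simp add: ennreal_mult)
qed

lemma sum_overlap_unit_intervals:
  assumes "0 \<le> \<alpha>" "\<alpha> \<le> \<beta>"
  shows "(\<Sum>k<N. max 0 (min 1 (\<beta> - real k) - max 0 (\<alpha> - real k)))
    = min (real N) \<beta> - min (real N) \<alpha>"
proof (induction N)
  case 0
  then show ?case
    using assms by simp
next
  case (Suc N)
  have "max 0 (min 1 (\<beta> - real N) - max 0 (\<alpha> - real N))
      = (min (real N + 1) \<beta> - min (real N + 1) \<alpha>) - (min (real N) \<beta> - min (real N) \<alpha>)"
    using assms by (simp add: min_def max_def)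
  then show ?case
    using Suc.IH by (simp add: add.commute)
qed

lemma phase_band_fmeasurable: "phase_band p \<alpha> \<beta> \<in> fmeasurable lborel"
proof -
  have "phase_band p \<alpha> \<beta> \<subseteq> cbox (0, 0) (1, 1)"
    using phase_band_Phi_inv by (fastforce simp: M_def cbox_Pair_eq)
  then have "emeasure lborel (phase_band p \<alpha> \<beta>) \<le> emeasure lborel (cbox (0::real, 0::real) (1, 1))"
    by (rule emeasure_mono) simp
  also have "\<dots> < \<infinity>"
    by (rule emeasure_lborel_cbox_finite)
  finally show ?thesis
    unfolding phase_band_def fmeasurable_def
    using level_box_sets by (auto simp: phase_band_def)
qed

lemma measure_phase_band:
  assumes "0 \<le> \<alpha>" "\<alpha> \<le> \<beta>" "\<beta> \<le> 2 ^ p"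
  shows "measure lborel (phase_band p \<alpha> \<beta>) = (\<beta> - \<alpha>) / 2 ^ p"
proof -
  have fmeasurable: "level_box p \<alpha> \<beta> k \<in> fmeasurable lborel" for k
    using level_box_sets emeasure_level_box by (simp add: fmeasurable_def)
  have "disjnt (level_box p \<alpha> \<beta> i) (level_box p \<alpha> \<beta> j)"
    if "i < 2 ^ p" "j < 2 ^ p" "i \<noteq> j" for i j
    using level_box_Phi_inv(2)[of i p _ \<alpha> \<beta>] level_box_Phi_inv(2)[of j p _ \<alpha> \<beta>] that
    by (fastforce simp: disjnt_def)
  then have "measure lborel (phase_band p \<alpha> \<beta>) = (\<Sum>k<2 ^ p. measure lborel (level_box p \<alpha> \<beta> k))"
    unfolding phase_band_def using fmeasurable by (intro measure_UNION') (auto simp: pairwise_def)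
  also have "\<dots> = (1/2) ^ p * (\<Sum>k<2 ^ p. max 0 (min 1 (\<beta> - real k) - max 0 (\<alpha> - real k)))"
    by (simp add: measure_def emeasure_level_box sum_distrib_left)
  also have "\<dots> = (\<beta> - \<alpha>) / 2 ^ p"
    using sum_overlap_unit_intervals[OF assms(1,2), of "2 ^ p"] assms by (simp add: power_one_over)
  finally show ?thesis .
qed

definition pulse_set :: "nat \<Rightarrow> real \<Rightarrow> (real \<times> real) set" where
  "pulse_set p d = phase_band p (2 ^ p / 4 + d * 2 ^ p / 2) (2 ^ p / 2)
     \<union> phase_band p (3 * 2 ^ p / 4 + d * 2 ^ p / 2) (2 ^ p)"

lemma pulse_set_Phi_inv:
  assumes "z \<in> pulse_set p d"
  shows "z \<in> M"
    and "2 ^ p / 4 + d * 2 ^ p / 2 \<le> snd (Phi_inv p z) \<and> snd (Phi_inv p z) < 2 ^ p / 2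
      \<or> 3 * 2 ^ p / 4 + d * 2 ^ p / 2 \<le> snd (Phi_inv p z) \<and> snd (Phi_inv p z) < 2 ^ p"
  using assms unfolding pulse_set_def by (auto dest: phase_band_Phi_inv)

lemma pulse_set_sets: "pulse_set p d \<in> sets lborel"
  unfolding pulse_set_def by (intro sets.Un fmeasurableD phase_band_fmeasurable)

lemma measure_pulse_set:
  assumes "0 < d" "d < 1/2"
  shows "measure lborel (pulse_set p d) = 1/2 - d"
proof -
  have disjoint: "phase_band p (2 ^ p / 4 + d * 2 ^ p / 2) (2 ^ p / 2)
      \<inter> phase_band p (3 * 2 ^ p / 4 + d * 2 ^ p / 2) (2 ^ p) = {}"
  proof (intro equals0I)
    fix z
    assume "z \<in> phase_band p (2 ^ p / 4 + d * 2 ^ p / 2) (2 ^ p / 2)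
      \<inter> phase_band p (3 * 2 ^ p / 4 + d * 2 ^ p / 2) (2 ^ p)"
    then have "snd (Phi_inv p z) < 2 ^ p / 2" "3 * 2 ^ p / 4 + d * 2 ^ p / 2 \<le> snd (Phi_inv p z)"
      by (auto dest: phase_band_Phi_inv)
    moreover have "0 \<le> d * 2 ^ p" "(0::real) < 2 ^ p"
      using assms by simp_all
    ultimately show False
      by linarith
  qed
  have band: "phase_band p \<alpha> \<beta> \<in> sets lborel" "emeasure lborel (phase_band p \<alpha> \<beta>) \<noteq> \<infinity>"
    for \<alpha> \<beta>
    using phase_band_fmeasurable[of p \<alpha> \<beta>] by (auto simp: fmeasurable_def)
  have bounds: "0 \<le> d * 2 ^ p" "d * 2 ^ p < 1/2 * 2 ^ p" "(0::real) < 2 ^ p"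
    using assms by simp_all
  have "measure lborel (pulse_set p d)
      = (2 ^ p / 2 - (2 ^ p / 4 + d * 2 ^ p / 2)) / 2 ^ p
        + (2 ^ p - (3 * 2 ^ p / 4 + d * 2 ^ p / 2)) / 2 ^ p"
    unfolding pulse_set_def measure_Union[OF band(2) band(2) band(1) band(1) disjoint]
    by (subst (1 2) measure_phase_band) (use bounds in linarith)+
  also have "\<dots> = 1/2 - d"
    by (simp add: field_simps)
  finally show ?thesis .
qed

definition orbit_block :: "(nat \<Rightarrow> nat) \<Rightarrow> (nat \<Rightarrow> real) \<Rightarrow> (nat \<Rightarrow> real) \<Rightarrow> real \<times> real
    \<Rightarrow> nat \<Rightarrow> real \<Rightarrow> real" where
  "orbit_block p a d z m s = block_profile (2 ^ p m / 2) (d m * (2 ^ p m / 2)) (a m)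
     ((snd (Phi_inv (p m) z) + s) rmod 2 ^ p m)"

lemma bigf_flow: "z \<in> M \<Longrightarrow> 0 \<le> s \<Longrightarrow> bigf p a d (flow s z) = (\<Sum>m. orbit_block p a d z m s)"
  using Phi_inv_flow by (simp add: bigf_def orbit_block_def block_eq_block_profile)

lemma abs_orbit_block_le: "\<bar>orbit_block p a d z m s\<bar> \<le> \<bar>a m\<bar>"
  unfolding orbit_block_def by (rule abs_block_profile_le)

lemma orbit_block_measurable [measurable]: "orbit_block p a d z m \<in> borel_measurable borel"
  unfolding orbit_block_def[abs_def] by measurable

lemma avg_bigf_eq_integral:
  assumes "z \<in> M" "0 < T" "\<And>m. 0 \<le> a m" "summable a"
  shows "T * avg (bigf p a d) T z = integral {0..T} (\<lambda>s. \<Sum>m. orbit_block p a d z m s)"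
proof -
  have "\<bar>orbit_block p a d z m s\<bar> \<le> a m" for m s
    using abs_orbit_block_le assms(3) by (metis abs_of_nonneg)
  then have bound: "\<bar>\<Sum>m. orbit_block p a d z m s\<bar> \<le> (\<Sum>m. a m)" for s
    using assms(4) by (rule abs_suminf_le)
  have "T * avg (bigf p a d) T z = (LINT s:{0..T}|lborel. bigf p a d (flow s z))"
    using assms(2) by (simp add: avg_def)
  also have "\<dots> = (LINT s:{0..T}|lborel. (\<Sum>m. orbit_block p a d z m s))"
    using bigf_flow assms(1) by (intro set_lebesgue_integral_cong) auto
  also have "\<dots> = integral {0..T} (\<lambda>s. \<Sum>m. orbit_block p a d z m s)"
    using bound by (intro set_integral_bounded_measurable_eq_integral) measurable
  finally show ?thesis .
qed

lemma integral_orbit_block_earlier: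
  assumes "p m + 2 \<le> q" "d m \<le> 1"
  shows "integral {0..2 ^ q / 4} (orbit_block p a d z m) = 0"
proof -
  obtain k where "q = p m + 2 + k"
    using le_Suc_ex[OF assms(1)] by blast
  then have "2 ^ q / 4 = 2 * (2 ^ p m / 2) * real (2 ^ k)"
    by (simp add: power_add)
  then show ?thesis
    using assms(2) integral_block_profile_periods[of "2 ^ p m / 2" "d m * (2 ^ p m / 2)" "2 ^ k"]
    by (simp add: orbit_block_def[abs_def])
qed

lemma abs_integral_orbit_block_pulse_set:
  assumes "z \<in> pulse_set (p n) (d n)" "0 < d n" "0 \<le> a n"
  shows "\<bar>integral {0..2 ^ p n / 4} (orbit_block p a d z n)\<bar> = 2 ^ p n / 4 * (2 * a n * d n)"
proof -
  define H :: real where "H = 2 ^ p n / 2"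
  have "H / 2 + d n * H \<le> V \<and> V < H \<or> 3 * H / 2 + d n * H \<le> V \<and> V < 2 * H"
    if "V = snd (Phi_inv (p n) z)" for V
    using pulse_set_Phi_inv(2)[OF assms(1)] that by (simp add: H_def)
  then have "\<bar>integral {0..H / 2} (orbit_block p a d z n)\<bar> = a n * (d n * H)"
    using abs_integral_block_profile_quarter[of "d n * H" "a n" H] assms(2,3)
    by (simp add: orbit_block_def[abs_def] H_def)
  then show ?thesis
    by (simp add: H_def)
qed

lemma avg_bigf_pulse_set:
  assumes gap: "\<And>m. m < n \<Longrightarrow> p m + 2 \<le> p n"
    and d_range: "\<And>m. 0 < d m \<and> d m < 1/2"
    and a_nonneg: "\<And>m. 0 \<le> a m"
    and "summable a"
    and z: "z \<in> pulse_set (p n) (d n)"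
  shows "\<bar>\<bar>avg (bigf p a d) (2 powr (real (p n) - 2)) z\<bar> - 2 * a n * d n\<bar> \<le> (\<Sum>m. a (m + Suc n))"
proof -
  define T :: real where "T = 2 ^ p n / 4"
  have T: "0 < T" "2 powr (real (p n) - 2) = T"
    by (simp_all add: T_def powr_diff powr_realpow)
  have bound: "\<bar>orbit_block p a d z m s\<bar> \<le> a m" for m s
    using abs_orbit_block_le a_nonneg by (metis abs_of_nonneg)
  have "T * avg (bigf p a d) T z = integral {0..T} (\<lambda>s. \<Sum>m. orbit_block p a d z m s)"
    using pulse_set_Phi_inv(1)[OF z] T(1) a_nonneg \<open>summable a\<close> by (rule avg_bigf_eq_integral)
  then have "\<bar>T * avg (bigf p a d) T z - (\<Sum>m<Suc n. integral {0..T} (orbit_block p a d z m))\<bar>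
      \<le> T * (\<Sum>m. a (m + Suc n))"
    using integral_suminf_tail_bound[OF orbit_block_measurable bound \<open>summable a\<close>, of T "Suc n"] T
    by simp
  moreover have "(\<Sum>m<n. integral {0..T} (orbit_block p a d z m)) = 0"
  proof (intro sum.neutral ballI)
    fix m
    assume "m \<in> {..<n}"
    then show "integral {0..T} (orbit_block p a d z m) = 0"
      unfolding T_def using gap d_range[of m] by (intro integral_orbit_block_earlier) auto
  qed
  ultimately have "\<bar>T * avg (bigf p a d) T z - integral {0..T} (orbit_block p a d z n)\<bar>
      \<le> T * (\<Sum>m. a (m + Suc n))"
    by simp
  moreover have "\<bar>integral {0..T} (orbit_block p a d z n)\<bar> = T * (2 * a n * d n)"
    using abs_integral_orbit_block_pulse_set z d_range a_nonneg by (simp add: T_def)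
  ultimately have "\<bar>\<bar>T * avg (bigf p a d) T z\<bar> - T * (2 * a n * d n)\<bar> \<le> T * (\<Sum>m. a (m + Suc n))"
    by linarith
  then show ?thesis
    using T by (simp add: abs_mult flip: right_diff_distrib)
qed

lemma lift_Suc_gap:
  fixes p :: "nat \<Rightarrow> nat"
  assumes "\<And>n. p n + 2 \<le> p (Suc n)" "m < n"
  shows "p m + 2 \<le> p n"
  using assms(2)
proof (induction n)
  case 0
  then show ?case by simp
next
  case (Suc n)
  then show ?case
    using assms(1)[of n] by (cases "m = n") auto
qed

theorem mainTheorem4:
  fixes p :: "nat \<Rightarrow> nat" and a d :: "nat \<Rightarrow> real"
  assumes p_gap: "\<And>n. p (Suc n) \<ge> p n + 2"
    and d_range: "\<And>n. 0 < d n \<and> d n < 1/2"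
    and a_pos: "\<And>n. a n > 0"
    and a_summable: "summable a"
    and tail: "(\<lambda>n. \<Sum>m. a (m + Suc n)) \<in> o(\<lambda>n. a n * d n)"
    and scale: "\<And>n m. n < m \<Longrightarrow> 2 powr (real (p n) - 2) < d m * 2 powr (real (p m) - 1)"
  shows "\<exists>D :: nat \<Rightarrow> (real \<times> real) set.
           (\<forall>n. D n \<in> sets lborel \<and> D n \<subseteq> M \<and> measure lborel (D n) = 1/2 - d n) \<and>
           (\<exists>\<epsilon> :: nat \<Rightarrow> real. \<epsilon> \<in> o(\<lambda>n. a n * d n) \<and>
              (\<forall>n. \<forall>z\<in>D n.
                 \<bar>\<bar>avg (bigf p a d) (2 powr (real (p n) - 2)) z\<bar> - 2 * a n * d n\<bar> \<le> \<epsilon> n))"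
proof (intro exI[of _ "\<lambda>n. pulse_set (p n) (d n)"] exI[of _ "\<lambda>n. \<Sum>m. a (m + Suc n)"]
    conjI allI ballI)
  fix n
  show "pulse_set (p n) (d n) \<in> sets lborel" "pulse_set (p n) (d n) \<subseteq> M"
    "measure lborel (pulse_set (p n) (d n)) = 1/2 - d n"
    using pulse_set_sets pulse_set_Phi_inv(1) measure_pulse_set d_range by auto
  show "\<bar>\<bar>avg (bigf p a d) (2 powr (real (p n) - 2)) z\<bar> - 2 * a n * d n\<bar> \<le> (\<Sum>m. a (m + Suc n))"
    if "z \<in> pulse_set (p n) (d n)" for z
    using lift_Suc_gap[of p, OF p_gap] d_range a_pos a_summable that
    by (intro avg_bigf_pulse_set[where p = p and a = a and d = d]) (auto intro: less_imp_le)
qed (rule tail)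

end
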